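(* Let the real variables be $c_{11},c_{22},c_{33},c_{44},c_{12},c_{23},c_{34},c_{41},s_{12},s_{23},s_{34},s_{41}$ (collectively $(c,s)$). Define $p_4=(c_{12}c_{34}-s_{12}s_{34})(c_{23}c_{41}-s_{23}s_{41})-(s_{12}c_{34}+c_{12}s_{34})(s_{23}c_{41}+c_{23}s_{41})-c_{11}c_{22}c_{33}c_{44}$, $p_{ij}=c_{ij}^2+s_{ij}^2-c_{ii}c_{jj}$ for $(i,j)\in\{(1,2),(2,3),(3,4),(4,1)\}$, $q_4^1=s_{12}c_{34}+c_{12}s_{34}+s_{23}c_{41}+c_{23}s_{41}$, $q_4^2=c_{12}c_{34}-s_{12}s_{34}-c_{23}c_{41}+s_{23}s_{41}$. Then $\{(c,s):p_4=p_{12}=p_{23}=p_{34}=p_{41}=0\}=\{(c,s):q_4^1=q_4^2=p_{12}=p_{23}=p_{34}=p_{41}=0\}$. *)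

theory Defs
  imports Main "HOL.Real"
begin

definition p4 :: "real \<Rightarrow> real \<Rightarrow> real \<Rightarrow> real \<Rightarrow> real \<Rightarrow> real \<Rightarrow> real \<Rightarrow> real \<Rightarrow> real \<Rightarrow> real \<Rightarrow> real \<Rightarrow> real \<Rightarrow> real" where
  "p4 c11 c22 c33 c44 c12 c23 c34 c41 s12 s23 s34 s41 =
     (c12*c34 - s12*s34)*(c23*c41 - s23*s41) - (s12*c34 + c12*s34)*(s23*c41 + c23*s41)
     - c11*c22*c33*c44"

definition pij :: "real \<Rightarrow> real \<Rightarrow> real \<Rightarrow> real \<Rightarrow> real" where
  "pij cii cjj cij sij = cij^2 + sij^2 - cii*cjj"

definition q41 :: "real \<Rightarrow> real \<Rightarrow> real \<Rightarrow> real \<Rightarrow> real \<Rightarrow> real \<Rightarrow> real \<Rightarrow> real \<Rightarrow> real" where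
  "q41 c12 c23 c34 c41 s12 s23 s34 s41 = s12*c34 + c12*s34 + s23*c41 + c23*s41"

definition q42 :: "real \<Rightarrow> real \<Rightarrow> real \<Rightarrow> real \<Rightarrow> real \<Rightarrow> real \<Rightarrow> real \<Rightarrow> real \<Rightarrow> real" where
  "q42 c12 c23 c34 c41 s12 s23 s34 s41 = c12*c34 - s12*s34 - c23*c41 + s23*s41"

end

theory Submission
  imports Defs
begin

text \<open>Read \<open>z\<^sub>i\<^sub>j = c\<^sub>i\<^sub>j + i s\<^sub>i\<^sub>j\<close> as complex numbers, so \<open>p\<^sub>i\<^sub>j = 0\<close> says
  \<open>|z\<^sub>i\<^sub>j|\<^sup>2 = c\<^sub>i\<^sub>i c\<^sub>j\<^sub>j\<close>. With \<open>a = z\<^sub>1\<^sub>2 z\<^sub>3\<^sub>4\<close> and \<open>b = z\<^sub>2\<^sub>3 z\<^sub>4\<^sub>1\<close> both \<open>|a|\<^sup>2\<close> and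
  \<open>|b|\<^sup>2\<close> equal \<open>P = c\<^sub>1\<^sub>1 c\<^sub>2\<^sub>2 c\<^sub>3\<^sub>3 c\<^sub>4\<^sub>4\<close>, and \<open>p\<^sub>4 = Re (a b) - P\<close>. Since
  \<open>|a - conj b|\<^sup>2 = |a|\<^sup>2 + |b|\<^sup>2 - 2 Re (a b) = -2 p\<^sub>4\<close>, the equation \<open>p\<^sub>4 = 0\<close> is
  equivalent to \<open>a = conj b\<close>, whose real and imaginary parts are \<open>q\<^sub>4\<^sup>2 = 0\<close> and \<open>q\<^sub>4\<^sup>1 = 0\<close>.\<close>

lemma sum_squares_mult:
  fixes a b c d :: "'a::comm_ring_1"
  shows "(a^2 + b^2) * (c^2 + d^2) = (a*c - b*d)^2 + (b*c + a*d)^2"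
  by (simp add: power2_eq_square algebra_simps)

lemma real_mult_sub_eq_iff_conj:
  fixes a1 a2 b1 b2 P :: real
  assumes a: "a1^2 + a2^2 = P" and b: "b1^2 + b2^2 = P"
  shows "a1*b1 - a2*b2 = P \<longleftrightarrow> a1 = b1 \<and> a2 = - b2"
proof -
  have "(a1 - b1)^2 + (a2 + b2)^2 = 2 * (P - (a1*b1 - a2*b2))"
    using a b by (simp add: power2_eq_square algebra_simps)
  then have "a1*b1 - a2*b2 = P \<longleftrightarrow> (a1 - b1)^2 + (a2 + b2)^2 = 0"
    by auto
  also have "\<dots> \<longleftrightarrow> a1 = b1 \<and> a2 = - b2"
    unfolding sum_power2_eq_zero_iff by auto
  finally show ?thesis .
qed

lemma p4_eq_0_iff_q41_q42:
  assumes "pij c11 c22 c12 s12 = 0" "pij c22 c33 c23 s23 = 0"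
    and "pij c33 c44 c34 s34 = 0" "pij c44 c11 c41 s41 = 0"
  shows "p4 c11 c22 c33 c44 c12 c23 c34 c41 s12 s23 s34 s41 = 0 \<longleftrightarrow>
    q41 c12 c23 c34 c41 s12 s23 s34 s41 = 0 \<and> q42 c12 c23 c34 c41 s12 s23 s34 s41 = 0"
proof -
  let ?P = "c11*c22*c33*c44"
  have a: "(c12*c34 - s12*s34)^2 + (s12*c34 + c12*s34)^2 = ?P"
    using assms(1,3) sum_squares_mult[of c12 s12 c34 s34]
    by (simp add: pij_def algebra_simps)
  have b: "(c23*c41 - s23*s41)^2 + (s23*c41 + c23*s41)^2 = ?P"
    using assms(2,4) sum_squares_mult[of c23 s23 c41 s41]
    by (simp add: pij_def algebra_simps)
  show ?thesis
    using real_mult_sub_eq_iff_conj[OF a b]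
    unfolding p4_def q41_def q42_def by (auto simp: algebra_simps)
qed

theorem proposition6:
  shows "{(c11, c22, c33, c44, c12, c23, c34, c41, s12, s23, s34, s41).
            p4 c11 c22 c33 c44 c12 c23 c34 c41 s12 s23 s34 s41 = 0 \<and>
            pij c11 c22 c12 s12 = 0 \<and> pij c22 c33 c23 s23 = 0 \<and>
            pij c33 c44 c34 s34 = 0 \<and> pij c44 c11 c41 s41 = 0}
       = {(c11, c22, c33, c44, c12, c23, c34, c41, s12, s23, s34, s41).
            q41 c12 c23 c34 c41 s12 s23 s34 s41 = 0 \<and>
            q42 c12 c23 c34 c41 s12 s23 s34 s41 = 0 \<and>
            pij c11 c22 c12 s12 = 0 \<and> pij c22 c33 c23 s23 = 0 \<and>
            pij c33 c44 c34 s34 = 0 \<and> pij c44 c11 c41 s41 = 0}"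
  using p4_eq_0_iff_q41_q42 by auto

end
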